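(* Let $p,q\ge1$, $N\ge1$, let $\mu$ be a $q\times p$ matrix of measures, and assume $\mathscr M_N$ admits a Gauss--Borel factorization $\mathscr M_N=\mathscr L_N^{-1}\mathscr U_N^{-1}$. Write $N=N_qq+s_q=N_pp+s_p$ with $s_q\in\{0,\dots,q-1\}$, $s_p\in\{0,\dots,p-1\}$. Then \[\mathscr M^{[N+q,N]}=\begin{pmatrix}\mathscr L_N^{-1}\\ L^{[N+q,N]}\end{pmatrix}\mathscr U_N^{-1},\qquad \mathscr M^{[N,N+p]}=\mathscr L_N^{-1}\begin{pmatrix}\mathscr U_N^{-1} & U^{[N,N+p]}\end{pmatrix},\] where $L^{[N+q,N]}\in\mathbb R^{q\times N}$ and $U^{[N,N+p]}\in\mathbb R^{N\times p}$ are given by \[L^{[N+q,N]}=\int x^{N_q}\,\mathfrak X_{[q,s_q]}(x)\,\mathrm d\mu(x)\,A^{[N]}(x),\qquad U^{[N,N+p]}=\int B^{[N]}(x)\,\mathrm d\mu(x)\,\big(\mathfrak X_{[p,s_p]}(x)\big)^\top x^{N_p}.\]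
   Context: All matrices are indexed from $0$. $\mu$ is a $q\times p$ matrix of real measures with finite moments. For $r,n\ge1$, $X^{[n]}_{[r]}(x)$ is the $n\times r$ matrix whose row $k$ is $x^{\lfloor k/r\rfloor}e_{k\bmod r}^\top$ ($e_0,\dots,e_{r-1}$ standard basis of $\mathbb R^r$). Moment matrices: $\mathscr M^{[n,m]}=\int X^{[n]}_{[q]}\,\mathrm d\mu\,(X^{[m]}_{[p]})^\top$, $\mathscr M_n=\mathscr M^{[n,n]}$. A Gauss--Borel factorization is $\mathscr M_N=\mathscr L_N^{-1}\mathscr U_N^{-1}$ with $\mathscr L_N$ nonsingular lower triangular and $\mathscr U_N$ nonsingular upper triangular. $B^{[N]}(x):=\mathscr L_NX^{[N]}_{[q]}(x)$ ($N\times q$) and $A^{[N]}(x):=(X^{[N]}_{[p]}(x))^\top\mathscr U_N$ ($p\times N$). For $0\le s\le r$, $\mathfrak X_{[r,s]}(x)$ is the $r\times r$ block matrix $\begin{pmatrix}0_{(r-s)\times s}&I_{r-s}\\ xI_s&0_{s\times(r-s)}\end{pmatrix}$. *)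

theory Defs
  imports "HOL-Analysis.Analysis" "Jordan_Normal_Form.Matrix"
begin

text \<open>A real (signed) measure on the real line, represented by a pair of (nonnegative)
  Borel measures (its positive and negative parts), with all moments finite.\<close>

type_synonym signed_measure = "real measure \<times> real measure"

definition finite_moments :: "signed_measure \<Rightarrow> bool" where
  "finite_moments m \<longleftrightarrow> sets (fst m) = sets borel \<and> sets (snd m) = sets borel \<and>
     (\<forall>k::nat. integrable (fst m) (\<lambda>x. x ^ k) \<and> integrable (snd m) (\<lambda>x. x ^ k))"

definition sint :: "signed_measure \<Rightarrow> (real \<Rightarrow> real) \<Rightarrow> real" where
  "sint m f = integral\<^sup>L (fst m) f - integral\<^sup>L (snd m) f"

definition mat_integral :: "nat \<Rightarrow> nat \<Rightarrow> nat \<Rightarrow> nat \<Rightarrow> (nat \<Rightarrow> nat \<Rightarrow> signed_measure)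
    \<Rightarrow> (real \<Rightarrow> real mat) \<Rightarrow> (real \<Rightarrow> real mat) \<Rightarrow> real mat" where
  "mat_integral n m q p \<mu> F G =
     mat n m (\<lambda>(a,b). \<Sum>i<q. \<Sum>j<p. sint (\<mu> i j) (\<lambda>x. F x $$ (a,i) * G x $$ (j,b)))"

definition Xmat :: "nat \<Rightarrow> nat \<Rightarrow> real \<Rightarrow> real mat" where
  "Xmat r n x = mat n r (\<lambda>(k,j). if j = k mod r then x ^ (k div r) else 0)"

text \<open>The r x r matrix frak X_{[r,s]}(x) = [[0, I_{r-s}], [x I_s, 0]].\<close>
definition Xfrak :: "nat \<Rightarrow> nat \<Rightarrow> real \<Rightarrow> real mat" where
  "Xfrak r s x = mat r r (\<lambda>(i,j). if i < r - s then (if j = i + s then 1 else 0)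
                                   else (if j + (r - s) = i then x else 0))"

definition moment_mat :: "nat \<Rightarrow> nat \<Rightarrow> (nat \<Rightarrow> nat \<Rightarrow> signed_measure) \<Rightarrow> nat \<Rightarrow> nat \<Rightarrow> real mat" where
  "moment_mat q p \<mu> n m = mat_integral n m q p \<mu> (Xmat q n) (\<lambda>x. transpose_mat (Xmat p m x))"

definition lower_triangular_mat :: "real mat \<Rightarrow> bool" where
  "lower_triangular_mat A \<longleftrightarrow> upper_triangular (transpose_mat A)"

definition append_cols_mat :: "real mat \<Rightarrow> real mat \<Rightarrow> real mat" where
  "append_cols_mat A B = four_block_mat A B (0\<^sub>m 0 (dim_col A)) (0\<^sub>m 0 (dim_col B))"

end

theory Submission
  imports Defs
begin

text \<open>
  The rows N, ..., N + q - 1 of X^[N+q]_[q](x) form the block x^(N div q) Xfrak_[q, N mod q](x),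
  so the moment matrix M^[N+q,N] is M_N = L^-1 U^-1 stacked on the integral of
  x^(N div q) Xfrak(x) d mu(x) X^[N]_[p](x)^T. Inserting U U^-1 = I and pulling the constant
  factor U^-1 out of the integral (legitimate since all entries are polynomials and all moments
  are finite) exhibits this block as L^[N+q,N] U^-1. The column extension is the row extension
  for the transposed matrix of measures, with the factorization transposed.
\<close>

lemma index_append_rows:
  assumes "A \<in> carrier_mat n1 k" "B \<in> carrier_mat n2 k" "i < n1 + n2" "j < k"
  shows "(A @\<^sub>r B) $$ (i, j) = (if i < n1 then A $$ (i, j) else B $$ (i - n1, j))"
  using assms by (simp add: append_rows_def)

lemma append_rows_mult:
  assumes "A \<in> carrier_mat n1 k" "B \<in> carrier_mat n2 k" "C \<in> carrier_mat k m"
  shows "(A @\<^sub>r B) * C = (A * C) @\<^sub>r (B * C)"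
proof (rule eq_matI)
  fix i j assume "i < dim_row ((A * C) @\<^sub>r (B * C))" "j < dim_col ((A * C) @\<^sub>r (B * C))"
  moreover have "(A * C) @\<^sub>r (B * C) \<in> carrier_mat (n1 + n2) m"
    using assms by auto
  ultimately have i: "i < n1 + n2" and j: "j < m"
    by auto
  have AB: "dim_row (A @\<^sub>r B) = n1 + n2" "dim_col (A @\<^sub>r B) = k"
    using carrier_append_rows[OF assms(1,2)] by auto
  have "row (A @\<^sub>r B) i = (if i < n1 then row A i else row B (i - n1))"
    by (rule eq_vecI) (use assms i AB in \<open>auto simp: index_append_rows\<close>)
  then show "((A @\<^sub>r B) * C) $$ (i, j) = ((A * C) @\<^sub>r (B * C)) $$ (i, j)"
    using assms i j AB by (simp add: index_append_rows[of "A * C" n1 m "B * C" n2])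
qed (use assms in \<open>auto simp: append_rows_def\<close>)

lemma transpose_append_rows:
  assumes "A \<in> carrier_mat n1 k" "B \<in> carrier_mat n2 k"
  shows "transpose_mat (A @\<^sub>r B) = append_cols_mat (transpose_mat A) (transpose_mat B)"
  using assms unfolding append_rows_def append_cols_mat_def
  by (subst transpose_four_block_mat[of _ n1 k _ 0 _ n2]) auto

lemma transpose_smult_mat: "transpose_mat (c \<cdot>\<^sub>m A) = c \<cdot>\<^sub>m transpose_mat A"
  by (rule eq_matI) auto

lemma real_polynomial_function_if:
  "real_polynomial_function f \<Longrightarrow> real_polynomial_function g \<Longrightarrow>
     real_polynomial_function (\<lambda>x. if b then f x else g x)"
  by (cases b) auto

lemma real_polynomial_function_pow: "real_polynomial_function (\<lambda>x::real. x ^ k)"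
  by (intro real_polynomial_function_power) (simp add: real_polynomial_function_eq)

lemma integrable_polynomial_function:
  assumes "finite_moments m" "real_polynomial_function f"
  shows "integrable (fst m) f" "integrable (snd m) f"
proof -
  obtain a n where "f = (\<lambda>x. \<Sum>i\<le>n. a i * x ^ i)"
    using assms(2) real_polynomial_function_iff_sum by blast
  then show "integrable (fst m) f" "integrable (snd m) f"
    using assms(1) by (auto simp: finite_moments_def)
qed

lemma sint_sum_mult:
  assumes "finite_moments m" "finite C" "\<And>c. c \<in> C \<Longrightarrow> real_polynomial_function (f c)"
  shows "sint m (\<lambda>x. \<Sum>c\<in>C. a c * f c x) = (\<Sum>c\<in>C. a c * sint m (f c))"
  using assms integrable_polynomial_function[OF assms(1)]
  by (simp add: sint_def integral_sum sum_subtractf right_diff_distrib sum_distrib_left)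

definition polynomial_mat_fun :: "nat \<Rightarrow> nat \<Rightarrow> (real \<Rightarrow> real mat) \<Rightarrow> bool" where
  "polynomial_mat_fun n m F \<longleftrightarrow>
     (\<forall>x. F x \<in> carrier_mat n m) \<and> (\<forall>i<n. \<forall>j<m. real_polynomial_function (\<lambda>x. F x $$ (i, j)))"

lemma polynomial_mat_fun_carrier: "polynomial_mat_fun n m F \<Longrightarrow> F x \<in> carrier_mat n m"
  by (simp add: polynomial_mat_fun_def)

lemma polynomial_mat_fun_entry:
  "polynomial_mat_fun n m F \<Longrightarrow> i < n \<Longrightarrow> j < m \<Longrightarrow> real_polynomial_function (\<lambda>x. F x $$ (i, j))"
  by (simp add: polynomial_mat_fun_def)

lemma polynomial_mat_fun_const: "A \<in> carrier_mat n m \<Longrightarrow> polynomial_mat_fun n m (\<lambda>x. A)"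
  by (auto simp: polynomial_mat_fun_def)

lemma polynomial_mat_fun_mult:
  assumes F: "polynomial_mat_fun n k F" and G: "polynomial_mat_fun k m G"
  shows "polynomial_mat_fun n m (\<lambda>x. F x * G x)"
  unfolding polynomial_mat_fun_def
proof (intro conjI allI impI)
  fix x show "F x * G x \<in> carrier_mat n m"
    by (rule mult_carrier_mat[OF polynomial_mat_fun_carrier[OF F] polynomial_mat_fun_carrier[OF G]])
next
  fix i j assume i: "i < n" and j: "j < m"
  have "(F x * G x) $$ (i, j) = (\<Sum>l<k. F x $$ (i, l) * G x $$ (l, j))" for x
    using polynomial_mat_fun_carrier[OF F, of x] polynomial_mat_fun_carrier[OF G, of x] i j
    by (auto simp: scalar_prod_def lessThan_atLeast0 intro!: sum.cong)
  then show "real_polynomial_function (\<lambda>x. (F x * G x) $$ (i, j))"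
    using polynomial_mat_fun_entry[OF F] polynomial_mat_fun_entry[OF G] i j
    by (auto intro!: real_polynomial_function_sum real_polynomial_function.intros(4))
qed

lemma mat_integral_carrier: "mat_integral n m q p \<mu> F G \<in> carrier_mat n m"
  by (simp add: mat_integral_def)

lemma transpose_mat_integral:
  assumes "\<And>x. F x \<in> carrier_mat n q" "\<And>x. G x \<in> carrier_mat p m"
  shows "transpose_mat (mat_integral n m q p \<mu> F G) =
           mat_integral m n p q (\<lambda>j i. \<mu> i j) (\<lambda>x. transpose_mat (G x)) (\<lambda>x. transpose_mat (F x))"
proof (rule eq_matI)
  fix b a assume "b < dim_row (mat_integral m n p q (\<lambda>j i. \<mu> i j) (\<lambda>x. transpose_mat (G x)) (\<lambda>x. transpose_mat (F x)))"
    and "a < dim_col (mat_integral m n p q (\<lambda>j i. \<mu> i j) (\<lambda>x. transpose_mat (G x)) (\<lambda>x. transpose_mat (F x)))"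
  then have b: "b < m" and a: "a < n" by (simp_all add: mat_integral_def)
  have entry: "transpose_mat (G x) $$ (b, j) * transpose_mat (F x) $$ (i, a) = F x $$ (a, i) * G x $$ (j, b)"
    if "i < q" "j < p" for x i j
    using assms(1)[of x] assms(2)[of x] a b that by simp
  have "transpose_mat (mat_integral n m q p \<mu> F G) $$ (b, a) =
          (\<Sum>i<q. \<Sum>j<p. sint (\<mu> i j) (\<lambda>x. F x $$ (a, i) * G x $$ (j, b)))"
    using a b by (simp add: mat_integral_def)
  also have "\<dots> = (\<Sum>j<p. \<Sum>i<q. sint (\<mu> i j) (\<lambda>x. transpose_mat (G x) $$ (b, j) * transpose_mat (F x) $$ (i, a)))"
    by (subst sum.swap) (simp add: entry)
  also have "\<dots> = mat_integral m n p q (\<lambda>j i. \<mu> i j) (\<lambda>x. transpose_mat (G x)) (\<lambda>x. transpose_mat (F x)) $$ (b, a)"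
    using a b by (simp add: mat_integral_def)
  finally show "transpose_mat (mat_integral n m q p \<mu> F G) $$ (b, a) = \<dots>" .
qed (simp_all add: mat_integral_def)

lemma mat_integral_mult_right:
  assumes \<mu>: "\<And>i j. i < q \<Longrightarrow> j < p \<Longrightarrow> finite_moments (\<mu> i j)"
    and F: "polynomial_mat_fun n q F" and G: "polynomial_mat_fun p m G" and M: "M \<in> carrier_mat m m'"
  shows "mat_integral n m q p \<mu> F G * M = mat_integral n m' q p \<mu> F (\<lambda>x. G x * M)"
proof (rule eq_matI)
  fix a b assume "a < dim_row (mat_integral n m' q p \<mu> F (\<lambda>x. G x * M))"
    and "b < dim_col (mat_integral n m' q p \<mu> F (\<lambda>x. G x * M))"
  then have a: "a < n" and b: "b < m'" by (simp_all add: mat_integral_def)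
  have GM: "(G x * M) $$ (j, b) = (\<Sum>c<m. M $$ (c, b) * G x $$ (j, c))" if "j < p" for x j
    using polynomial_mat_fun_carrier[OF G, of x] M that b
    by (auto simp: scalar_prod_def lessThan_atLeast0 mult.commute intro!: sum.cong)
  have "(mat_integral n m q p \<mu> F G * M) $$ (a, b) =
          (\<Sum>c<m. (\<Sum>i<q. \<Sum>j<p. sint (\<mu> i j) (\<lambda>x. F x $$ (a, i) * G x $$ (j, c))) * M $$ (c, b))"
    using a b M by (simp add: mat_integral_def scalar_prod_def lessThan_atLeast0)
  also have "\<dots> = (\<Sum>i<q. \<Sum>j<p. \<Sum>c<m. M $$ (c, b) * sint (\<mu> i j) (\<lambda>x. F x $$ (a, i) * G x $$ (j, c)))"
    by (simp add: sum_distrib_left mult.commute sum.swap[of _ "{..<m}"])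
  also have "\<dots> = (\<Sum>i<q. \<Sum>j<p. sint (\<mu> i j) (\<lambda>x. F x $$ (a, i) * (G x * M) $$ (j, b)))"
  proof (intro sum.cong refl)
    fix i j assume i: "i \<in> {..<q}" and j: "j \<in> {..<p}"
    have "(\<lambda>x. F x $$ (a, i) * (G x * M) $$ (j, b)) = (\<lambda>x. \<Sum>c<m. M $$ (c, b) * (F x $$ (a, i) * G x $$ (j, c)))"
      using j by (simp add: GM sum_distrib_left mult_ac)
    then show "(\<Sum>c<m. M $$ (c, b) * sint (\<mu> i j) (\<lambda>x. F x $$ (a, i) * G x $$ (j, c))) =
                 sint (\<mu> i j) (\<lambda>x. F x $$ (a, i) * (G x * M) $$ (j, b))"
      using \<mu> i j a polynomial_mat_fun_entry[OF F] polynomial_mat_fun_entry[OF G]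
        sint_sum_mult[of "\<mu> i j" "{..<m}" "\<lambda>c x. F x $$ (a, i) * G x $$ (j, c)" "\<lambda>c. M $$ (c, b)"]
      by (simp add: real_polynomial_function.intros(4))
  qed
  also have "\<dots> = mat_integral n m' q p \<mu> F (\<lambda>x. G x * M) $$ (a, b)"
    using a b by (simp add: mat_integral_def)
  finally show "(mat_integral n m q p \<mu> F G * M) $$ (a, b) = \<dots>" .
qed (use M in \<open>simp_all add: mat_integral_def\<close>)

lemma mat_integral_append_rows:
  assumes "\<And>x. F1 x \<in> carrier_mat n1 q" "\<And>x. F2 x \<in> carrier_mat n2 q"
  shows "mat_integral (n1 + n2) m q p \<mu> (\<lambda>x. F1 x @\<^sub>r F2 x) G =
           mat_integral n1 m q p \<mu> F1 G @\<^sub>r mat_integral n2 m q p \<mu> F2 G"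
proof (rule eq_matI)
  fix a b assume "a < dim_row (mat_integral n1 m q p \<mu> F1 G @\<^sub>r mat_integral n2 m q p \<mu> F2 G)"
    and "b < dim_col (mat_integral n1 m q p \<mu> F1 G @\<^sub>r mat_integral n2 m q p \<mu> F2 G)"
  moreover have "mat_integral n1 m q p \<mu> F1 G @\<^sub>r mat_integral n2 m q p \<mu> F2 G \<in> carrier_mat (n1 + n2) m"
    by (auto simp: mat_integral_def)
  ultimately have a: "a < n1 + n2" and b: "b < m"
    by auto
  have "(F1 x @\<^sub>r F2 x) $$ (a, i) = (if a < n1 then F1 x $$ (a, i) else F2 x $$ (a - n1, i))"
    if "i < q" for x i
    using index_append_rows[OF assms(1)[of x] assms(2)[of x] a that] .
  then show "mat_integral (n1 + n2) m q p \<mu> (\<lambda>x. F1 x @\<^sub>r F2 x) G $$ (a, b) =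
      (mat_integral n1 m q p \<mu> F1 G @\<^sub>r mat_integral n2 m q p \<mu> F2 G) $$ (a, b)"
    using a b by (auto simp: mat_integral_def index_append_rows[of _ n1 m _ n2] intro!: sum.cong)
qed (auto simp: mat_integral_def append_rows_def)

lemma dim_Xmat [simp]: "dim_row (Xmat r n x) = n" "dim_col (Xmat r n x) = r"
  by (simp_all add: Xmat_def)

lemma carrier_Xmat [simp]: "Xmat r n x \<in> carrier_mat n r"
  by (simp add: carrier_matI)

lemma index_Xmat [simp]:
  "k < n \<Longrightarrow> j < r \<Longrightarrow> Xmat r n x $$ (k, j) = (if j = k mod r then x ^ (k div r) else 0)"
  by (simp add: Xmat_def)

lemma dim_Xfrak [simp]: "dim_row (Xfrak r s x) = r" "dim_col (Xfrak r s x) = r"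
  by (simp_all add: Xfrak_def)

lemma index_smult_Xfrak:
  assumes "a < r" "i < r"
  shows "(x ^ (n div r) \<cdot>\<^sub>m Xfrak r (n mod r) x) $$ (a, i) =
           (if i = (n + a) mod r then x ^ ((n + a) div r) else 0)"
proof -
  define k s where "k = n div r" and "s = n mod r"
  have n: "n = k * r + s" and s: "s < r" and r: "r \<noteq> 0"
    using assms unfolding k_def s_def by auto
  show ?thesis
  proof (cases "a < r - s")
    case True
    then have "(n + a) div r = k" "(n + a) mod r = s + a"
      unfolding n using s by (auto simp: add.assoc)
    then show ?thesis
      using True assms unfolding Xfrak_def k_def[symmetric] s_def[symmetric] by auto
  next
    case False
    have eq: "n + a = (s + a - r) + (k + 1) * r" and lt: "s + a - r < r"
      unfolding n using False s assms by auto
    have "(n + a) div r = k + 1" "(n + a) mod r = s + a - r"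
      unfolding eq div_mult_self1[OF r] mod_mult_self1 using lt by simp_all
    moreover have "i + (r - s) = a \<longleftrightarrow> i = s + a - r"
      using False s by auto
    ultimately show ?thesis
      using False assms unfolding Xfrak_def k_def[symmetric] s_def[symmetric] by auto
  qed
qed

lemma Xmat_append_rows: "Xmat r (n + r) x = Xmat r n x @\<^sub>r (x ^ (n div r) \<cdot>\<^sub>m Xfrak r (n mod r) x)"
proof (rule eq_matI)
  have carrier: "Xmat r n x \<in> carrier_mat n r" "x ^ (n div r) \<cdot>\<^sub>m Xfrak r (n mod r) x \<in> carrier_mat r r"
    by auto
  fix k j assume "k < dim_row (Xmat r n x @\<^sub>r (x ^ (n div r) \<cdot>\<^sub>m Xfrak r (n mod r) x))"
    and "j < dim_col (Xmat r n x @\<^sub>r (x ^ (n div r) \<cdot>\<^sub>m Xfrak r (n mod r) x))"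
  then have k: "k < n + r" and j: "j < r"
    using carrier_append_rows[OF carrier] by auto
  show "Xmat r (n + r) x $$ (k, j) = (Xmat r n x @\<^sub>r (x ^ (n div r) \<cdot>\<^sub>m Xfrak r (n mod r) x)) $$ (k, j)"
  proof (cases "k < n")
    case True
    then show ?thesis
      using k j by (simp add: index_append_rows[OF carrier k j])
  next
    case False
    then have "k - n < r" "n + (k - n) = k"
      using k by auto
    then show ?thesis
      using False k j index_smult_Xfrak[of "k - n" r j x n]
      by (simp add: index_append_rows[OF carrier k j] del: index_smult_mat(1))
  qed
qed (simp_all add: append_rows_def)

lemma polynomial_mat_fun_transpose_Xmat: "polynomial_mat_fun r n (\<lambda>x. transpose_mat (Xmat r n x))"
  by (auto simp: polynomial_mat_fun_def intro!: real_polynomial_function_if real_polynomial_function_pow)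

lemma polynomial_mat_fun_smult_Xfrak:
  "polynomial_mat_fun r r (\<lambda>x. x ^ (n div r) \<cdot>\<^sub>m Xfrak r (n mod r) x)"
  by (auto simp: polynomial_mat_fun_def index_smult_Xfrak simp del: index_smult_mat(1)
      intro!: real_polynomial_function_if real_polynomial_function_pow)

lemma moment_mat_append_rows:
  "moment_mat q p \<mu> (n + q) m =
     moment_mat q p \<mu> n m @\<^sub>r
       mat_integral q m q p \<mu> (\<lambda>x. x ^ (n div q) \<cdot>\<^sub>m Xfrak q (n mod q) x) (\<lambda>x. transpose_mat (Xmat p m x))"
  unfolding moment_mat_def Xmat_append_rows
  by (rule mat_integral_append_rows) auto

lemma transpose_moment_mat: "transpose_mat (moment_mat q p \<mu> n m) = moment_mat p q (\<lambda>j i. \<mu> i j) m n"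
  unfolding moment_mat_def by (subst transpose_mat_integral) auto

lemma gauss_borel_append_rows:
  assumes \<mu>: "\<And>i j. i < q \<Longrightarrow> j < p \<Longrightarrow> finite_moments (\<mu> i j)"
    and U: "U \<in> carrier_mat N N" and Uinv: "Uinv \<in> carrier_mat N N" and UUinv: "U * Uinv = 1\<^sub>m N"
    and Linv: "Linv \<in> carrier_mat N N" and factor: "moment_mat q p \<mu> N N = Linv * Uinv"
  shows "moment_mat q p \<mu> (N + q) N =
           (Linv @\<^sub>r mat_integral q N q p \<mu> (\<lambda>x. x ^ (N div q) \<cdot>\<^sub>m Xfrak q (N mod q) x)
              (\<lambda>x. transpose_mat (Xmat p N x) * U)) * Uinv"
proof -
  let ?F = "\<lambda>x. x ^ (N div q) \<cdot>\<^sub>m Xfrak q (N mod q) x"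
  have XU: "polynomial_mat_fun p N (\<lambda>x. transpose_mat (Xmat p N x) * U)"
    by (rule polynomial_mat_fun_mult[OF polynomial_mat_fun_transpose_Xmat polynomial_mat_fun_const[OF U]])
  have "mat_integral q N q p \<mu> ?F (\<lambda>x. transpose_mat (Xmat p N x) * U) * Uinv =
          mat_integral q N q p \<mu> ?F (\<lambda>x. transpose_mat (Xmat p N x) * U * Uinv)"
    by (rule mat_integral_mult_right[OF \<mu> polynomial_mat_fun_smult_Xfrak XU Uinv])
  also have "\<dots> = mat_integral q N q p \<mu> ?F (\<lambda>x. transpose_mat (Xmat p N x))"
  proof -
    have "transpose_mat (Xmat p N x) * U * Uinv = transpose_mat (Xmat p N x)" for x
      using U Uinv UUinv by (simp add: assoc_mult_mat[of "transpose_mat (Xmat p N x)" p N])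
    then show ?thesis
      by simp
  qed
  finally show ?thesis
    using factor moment_mat_append_rows[of q p \<mu> N N] append_rows_mult[OF Linv mat_integral_carrier Uinv]
    by simp
qed

lemma gauss_borel_append_cols:
  assumes \<mu>: "\<And>i j. i < q \<Longrightarrow> j < p \<Longrightarrow> finite_moments (\<mu> i j)"
    and L: "L \<in> carrier_mat N N" and Linv: "Linv \<in> carrier_mat N N" and LinvL: "Linv * L = 1\<^sub>m N"
    and Uinv: "Uinv \<in> carrier_mat N N" and factor: "moment_mat q p \<mu> N N = Linv * Uinv"
  shows "moment_mat q p \<mu> N (N + p) =
           Linv * append_cols_mat Uinv (mat_integral N p q p \<mu> (\<lambda>x. L * Xmat q N x)
              (\<lambda>x. x ^ (N div p) \<cdot>\<^sub>m transpose_mat (Xfrak p (N mod p) x)))"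
proof -
  let ?\<nu> = "\<lambda>j i. \<mu> i j"
  let ?I = "mat_integral p N p q ?\<nu> (\<lambda>x. x ^ (N div p) \<cdot>\<^sub>m Xfrak p (N mod p) x)
              (\<lambda>x. transpose_mat (Xmat q N x) * transpose_mat L)"
  have "transpose_mat L * transpose_mat Linv = 1\<^sub>m N"
    using L Linv LinvL transpose_mult[OF Linv L] by simp
  moreover have "moment_mat p q ?\<nu> N N = transpose_mat Uinv * transpose_mat Linv"
    using factor transpose_moment_mat[of q p \<mu> N N] transpose_mult[OF Linv Uinv] by simp
  ultimately have rows: "moment_mat p q ?\<nu> (N + p) N = (transpose_mat Uinv @\<^sub>r ?I) * transpose_mat Linv"
    using \<mu> L Linv Uinv by (intro gauss_borel_append_rows) auto
  have "moment_mat q p \<mu> N (N + p) = transpose_mat (moment_mat p q ?\<nu> (N + p) N)"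
    by (simp add: transpose_moment_mat)
  also have "\<dots> = Linv * transpose_mat (transpose_mat Uinv @\<^sub>r ?I)"
    unfolding rows using Linv Uinv
    by (simp add: transpose_mult[of _ "N + p" N _ N] carrier_append_rows mat_integral_carrier)
  also have "transpose_mat (transpose_mat Uinv @\<^sub>r ?I) = append_cols_mat Uinv (transpose_mat ?I)"
    using Uinv by (simp add: transpose_append_rows[of _ N N _ p] mat_integral_carrier)
  also have "transpose_mat ?I = mat_integral N p q p \<mu> (\<lambda>x. L * Xmat q N x)
              (\<lambda>x. x ^ (N div p) \<cdot>\<^sub>m transpose_mat (Xfrak p (N mod p) x))"
    using L by (subst transpose_mat_integral) (auto simp: transpose_mult[of _ q N] transpose_smult_mat)
  finally show ?thesis .
qed

theorem mainTheorem5: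
  fixes p q N :: nat
    and \<mu> :: "nat \<Rightarrow> nat \<Rightarrow> signed_measure"
    and L U Linv Uinv :: "real mat"
  assumes "p \<ge> 1" and "q \<ge> 1" and "N \<ge> 1"
    and "\<And>i j. i < q \<Longrightarrow> j < p \<Longrightarrow> finite_moments (\<mu> i j)"
    and "L \<in> carrier_mat N N" and "lower_triangular_mat L" and "invertible_mat L"
    and "U \<in> carrier_mat N N" and "upper_triangular U" and "invertible_mat U"
    and "Linv \<in> carrier_mat N N" and "inverts_mat L Linv" and "inverts_mat Linv L"
    and "Uinv \<in> carrier_mat N N" and "inverts_mat U Uinv" and "inverts_mat Uinv U"
    and "moment_mat q p \<mu> N N = Linv * Uinv"
  shows "moment_mat q p \<mu> (N + q) N =
           (Linv @\<^sub>r mat_integral q N q p \<mu>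
                (\<lambda>x. x ^ (N div q) \<cdot>\<^sub>m Xfrak q (N mod q) x)
                (\<lambda>x. transpose_mat (Xmat p N x) * U)) * Uinv \<and>
         moment_mat q p \<mu> N (N + p) =
           Linv * append_cols_mat Uinv
             (mat_integral N p q p \<mu>
                (\<lambda>x. L * Xmat q N x)
                (\<lambda>x. x ^ (N div p) \<cdot>\<^sub>m transpose_mat (Xfrak p (N mod p) x)))"
proof -
  have "U * Uinv = 1\<^sub>m N" and "Linv * L = 1\<^sub>m N"
    using assms(8,11,13,15) by (simp_all add: inverts_mat_def)
  then show ?thesis
    using assms(4,5,8,11,14,17) by (simp add: gauss_borel_append_rows gauss_borel_append_cols)
qed

end
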